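(* Let $n\ge2$, $\ell\ge1$, and $\lambda,\mu\in P_n$ with $\lambda-\mu\equiv\sum_{i=1}^n\ell_i\epsilon_i$ modulo $\mathbb C\epsilon$ for nonnegative integers $\ell_1,\dots,\ell_n$ with $\sum_i\ell_i=\ell$. Let $u_{\lambda,\mu}\in F_\lambda(M(\mu))$ be the image of $v_\mu\otimes u_1^{\otimes\ell_1}\otimes\cdots\otimes u_n^{\otimes\ell_n}$, and let $\bar y_i$ be the operator on $F_\lambda(M(\mu))$ induced by $y_i$. Then for each $i=1,\dots,\ell$, $$\bar y_iu_{\lambda,\mu}=\zeta_i\,u_{\lambda,\mu},$$ where, for $\sum_{k<m}\ell_k<i\le\sum_{k\le m}\ell_k$, $\zeta_i=\mu'_m+i-\sum_{k<m}\ell_k-1$ with $\mu'_m=\langle\mu+\rho,\epsilon^\vee_m\rangle$.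
   Context: $\mathfrak{sl}_n=\mathfrak n_+\oplus\mathfrak h_n\oplus\mathfrak n_-$ standard; $\epsilon_i$ the $i$-th diagonal coordinate, $\epsilon=\sum_i\epsilon_i$; $\mathfrak h_n^*$ is identified with $\{\sum\lambda_i\epsilon_i:\sum\lambda_i=0\}\subset\mathfrak t_n^*=\bigoplus\mathbb C\epsilon_i$, with $\epsilon_i^\vee$ the dual basis of $\mathfrak t_n$; $\rho=\sum_i\frac{n-2i+1}{2}\epsilon_i$; $P_n$ is the integral weight lattice. $M(\mu)$ is the Verma module with highest weight vector $v_\mu$; $V_n=\mathbb C^n$ with standard basis $u_1,\dots,u_n$ ($u_i$ of weight the restriction of $\epsilon_i$ to $\mathfrak h_n$). $F_\lambda(X)=H_0(\mathfrak n_-,X\otimes V_n^{\otimes\ell})_\lambda=(X\otimes V_n^{\otimes\ell}/\mathfrak n_-(X\otimes V_n^{\otimes\ell}))_\lambda$. With $(x|y)=\mathrm{tr}(xy)$, $\Omega=\sum_a x_a\otimes x^a$ for dual bases, $\Omega_{ij}$ acting in tensor factors $i,j$ of $X\otimes V_n^{\otimes\ell}$ (factor $0$ is $X$), the operators $y_i=\Omega_{0i}+\sum_{1\le j<i}(\Omega_{ji}+\frac1n)+\frac{n-1}2$ commute with $\mathfrak{sl}_n$ and thus induce operators $\bar y_i$ on $F_\lambda(X)$. *)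

theory Defs
  imports Complex_Main "HOL-Library.Function_Algebras"
begin

text \<open>Elements of gl_n are matrices nat => nat => complex with indices in {1..n}
 (entries outside are zero).  sl_n is the trace-zero part.\<close>

type_synonym mat = "nat \<Rightarrow> nat \<Rightarrow> complex"

definition mat_on :: "nat \<Rightarrow> mat \<Rightarrow> bool" where
  "mat_on n x \<longleftrightarrow> (\<forall>i j. x i j \<noteq> 0 \<longrightarrow> i \<in> {1..n} \<and> j \<in> {1..n})"

definition sl :: "nat \<Rightarrow> mat set" where
  "sl n = {x. mat_on n x \<and> (\<Sum>i=1..n. x i i) = 0}"

definition E :: "nat \<Rightarrow> nat \<Rightarrow> mat" where
  "E a b = (\<lambda>i j. if i = a \<and> j = b then 1 else 0)"

definition Id_n :: "nat \<Rightarrow> mat" where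
  "Id_n n = (\<lambda>i j. if i = j \<and> i \<in> {1..n} then 1 else 0)"

text \<open>The trace-zero projection E_ab - delta_ab/n I; with these,
 Omega = sum_{a,b} Ebar_ab (x) Ebar_ba is the Casimir tensor of sl_n
 for the trace form (x|y) = tr(xy).\<close>
definition Ebar :: "nat \<Rightarrow> nat \<Rightarrow> nat \<Rightarrow> mat" where
  "Ebar n a b = (\<lambda>i j. E a b i j - (if a = b then Id_n n i j / of_nat n else 0))"

definition mat_mult :: "nat \<Rightarrow> mat \<Rightarrow> mat \<Rightarrow> mat" where
  "mat_mult n x y = (\<lambda>i j. \<Sum>k=1..n. x i k * y k j)"

definition bracket :: "nat \<Rightarrow> mat \<Rightarrow> mat \<Rightarrow> mat" where
  "bracket n x y = (\<lambda>i j. mat_mult n x y i j - mat_mult n y x i j)"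

definition diag :: "(nat \<Rightarrow> complex) \<Rightarrow> mat" where
  "diag d = (\<lambda>i j. if i = j then d i else 0)"

definition sl_rep ::
  "nat \<Rightarrow> (complex \<Rightarrow> 'x::ab_group_add \<Rightarrow> 'x) \<Rightarrow> (mat \<Rightarrow> 'x \<Rightarrow> 'x) \<Rightarrow> bool" where
  "sl_rep n scale act \<longleftrightarrow>
     vector_space scale \<and>
     (\<forall>x\<in>sl n. \<forall>v w. act x (v + w) = act x v + act x w) \<and>
     (\<forall>x\<in>sl n. \<forall>c v. act x (scale c v) = scale c (act x v)) \<and>
     (\<forall>x\<in>sl n. \<forall>y\<in>sl n. \<forall>v. act (\<lambda>i j. x i j + y i j) v = act x v + act y v) \<and>
     (\<forall>x\<in>sl n. \<forall>c v. act (\<lambda>i j. c * x i j) v = scale c (act x v)) \<and>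
     (\<forall>x\<in>sl n. \<forall>y\<in>sl n. \<forall>v.
        act (bracket n x y) v = act x (act y v) - act y (act x v))"

text \<open>Integral weights of sl_n, realised as sum-zero vectors (lambda_1,...,lambda_n)
 in the span of the epsilon_i.\<close>
definition weight :: "nat \<Rightarrow> (nat \<Rightarrow> complex) \<Rightarrow> bool" where
  "weight n \<mu> \<longleftrightarrow> (\<Sum>i=1..n. \<mu> i) = 0"

definition integral_weight :: "nat \<Rightarrow> (nat \<Rightarrow> complex) \<Rightarrow> bool" where
  "integral_weight n \<mu> \<longleftrightarrow> weight n \<mu> \<and>
     (\<forall>i\<in>{1..n}. \<forall>j\<in>{1..n}. \<mu> i - \<mu> j \<in> \<int>)"

definition rho :: "nat \<Rightarrow> nat \<Rightarrow> complex" where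
  "rho n i = (of_int (int n - 2 * int i + 1)) / 2"

text \<open>Negative roots (a,b) with a > b, in a fixed order, for the PBW basis.\<close>
definition negroots :: "nat \<Rightarrow> (nat \<times> nat) list" where
  "negroots n = concat (map (\<lambda>a. map (\<lambda>b. (a, b)) [1..<a]) [1..<n+1])"

definition pbw_monomial ::
  "nat \<Rightarrow> (mat \<Rightarrow> 'x \<Rightarrow> 'x) \<Rightarrow> 'x \<Rightarrow> (nat \<times> nat \<Rightarrow> nat) \<Rightarrow> 'x" where
  "pbw_monomial n act v k =
     foldr (\<lambda>(a, b) z. (act (E a b) ^^ k (a, b)) z) (negroots n) v"

definition pbw_exps :: "nat \<Rightarrow> (nat \<times> nat \<Rightarrow> nat) set" where
  "pbw_exps n = {k. \<forall>r. r \<notin> set (negroots n) \<longrightarrow> k r = 0}"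

text \<open>(scale, act, v) is the Verma module M(mu): v is a highest weight vector
 of weight mu and the PBW monomials in the f_ab = E_ab (a > b) applied to v
 form a basis, i.e. U(n_-) -> M(mu), u |-> u v is a linear isomorphism.\<close>
definition is_verma ::
  "nat \<Rightarrow> (complex \<Rightarrow> 'x::ab_group_add \<Rightarrow> 'x) \<Rightarrow> (mat \<Rightarrow> 'x \<Rightarrow> 'x) \<Rightarrow> 'x
     \<Rightarrow> (nat \<Rightarrow> complex) \<Rightarrow> bool" where
  "is_verma n scale act v \<mu> \<longleftrightarrow>
     sl_rep n scale act \<and>
     (\<forall>a\<in>{1..n}. \<forall>b\<in>{1..n}. a < b \<longrightarrow> act (E a b) v = 0) \<and>
     (\<forall>d. diag d \<in> sl n \<longrightarrow> act (diag d) v = scale (\<Sum>k=1..n. d k * \<mu> k) v) \<and>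
     inj_on (pbw_monomial n act v) (pbw_exps n) \<and>
     \<not> module.dependent scale (pbw_monomial n act v ` pbw_exps n) \<and>
     module.span scale (pbw_monomial n act v ` pbw_exps n) = UNIV"

text \<open>X (x) V_n^{(x) l} is identified with functions from words w (lists of length l
 with entries in {1..n}) to X: F corresponds to sum_w F(w) (x) u_{w_1} (x) ... (x) u_{w_l}.
 Functions are taken to vanish off words.\<close>

definition words :: "nat \<Rightarrow> nat \<Rightarrow> nat list set" where
  "words n l = {w. length w = l \<and> set w \<subseteq> {1..n}}"

type_synonym 'x tens = "nat list \<Rightarrow> 'x"

definition scaleT :: "(complex \<Rightarrow> 'x \<Rightarrow> 'x) \<Rightarrow> complex \<Rightarrow> 'x tens \<Rightarrow> 'x tens" where
  "scaleT scale c F = (\<lambda>w. scale c (F w))"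

definition fac0 :: "nat \<Rightarrow> nat \<Rightarrow> (mat \<Rightarrow> 'x::ab_group_add \<Rightarrow> 'x) \<Rightarrow> mat \<Rightarrow> 'x tens \<Rightarrow> 'x tens" where
  "fac0 n l act x F = (\<lambda>w. if w \<in> words n l then act x (F w) else 0)"

text \<open>x acting in tensor factor j (1 <= j <= l), a copy of V_n:
 x u_b = sum_a x_ab u_a.\<close>
definition facV :: "nat \<Rightarrow> nat \<Rightarrow> (complex \<Rightarrow> 'x::ab_group_add \<Rightarrow> 'x) \<Rightarrow> nat \<Rightarrow> mat \<Rightarrow> 'x tens \<Rightarrow> 'x tens" where
  "facV n l scale j x F = (\<lambda>w. if w \<in> words n l
       then (\<Sum>b=1..n. scale (x (w ! (j - 1)) b) (F (w[j - 1 := b]))) else 0)"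

definition actT :: "nat \<Rightarrow> nat \<Rightarrow> (complex \<Rightarrow> 'x::ab_group_add \<Rightarrow> 'x) \<Rightarrow> (mat \<Rightarrow> 'x \<Rightarrow> 'x)
     \<Rightarrow> mat \<Rightarrow> 'x tens \<Rightarrow> 'x tens" where
  "actT n l scale act x F = fac0 n l act x F + (\<Sum>j=1..l. facV n l scale j x F)"

definition Omega0 :: "nat \<Rightarrow> nat \<Rightarrow> (complex \<Rightarrow> 'x::ab_group_add \<Rightarrow> 'x) \<Rightarrow> (mat \<Rightarrow> 'x \<Rightarrow> 'x)
     \<Rightarrow> nat \<Rightarrow> 'x tens \<Rightarrow> 'x tens" where
  "Omega0 n l scale act i F =
     (\<Sum>a=1..n. \<Sum>b=1..n. fac0 n l act (Ebar n a b) (facV n l scale i (Ebar n b a) F))"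

definition OmegaV :: "nat \<Rightarrow> nat \<Rightarrow> (complex \<Rightarrow> 'x::ab_group_add \<Rightarrow> 'x)
     \<Rightarrow> nat \<Rightarrow> nat \<Rightarrow> 'x tens \<Rightarrow> 'x tens" where
  "OmegaV n l scale j i F =
     (\<Sum>a=1..n. \<Sum>b=1..n. facV n l scale j (Ebar n a b) (facV n l scale i (Ebar n b a) F))"

definition yop :: "nat \<Rightarrow> nat \<Rightarrow> (complex \<Rightarrow> 'x::ab_group_add \<Rightarrow> 'x) \<Rightarrow> (mat \<Rightarrow> 'x \<Rightarrow> 'x)
     \<Rightarrow> nat \<Rightarrow> 'x tens \<Rightarrow> 'x tens" where
  "yop n l scale act i F =
     Omega0 n l scale act i F
     + (\<Sum>j\<in>{1..<i}. OmegaV n l scale j i F + scaleT scale (1 / of_nat n) F)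
     + scaleT scale ((of_nat n - 1) / 2) F"

definition nminus_image :: "nat \<Rightarrow> nat \<Rightarrow> (complex \<Rightarrow> 'x::ab_group_add \<Rightarrow> 'x) \<Rightarrow> (mat \<Rightarrow> 'x \<Rightarrow> 'x)
     \<Rightarrow> 'x tens set" where
  "nminus_image n l scale act =
     module.span (scaleT scale)
       {actT n l scale act (E a b) F | a b F. a \<in> {1..n} \<and> b \<in> {1..n} \<and> b < a}"

text \<open>Equality of images in H_0(n_-, X (x) V^{(x) l}) = (X (x) V^{(x) l}) / n_-(...).\<close>
definition coinv_eq :: "nat \<Rightarrow> nat \<Rightarrow> (complex \<Rightarrow> 'x::ab_group_add \<Rightarrow> 'x) \<Rightarrow> (mat \<Rightarrow> 'x \<Rightarrow> 'x)
     \<Rightarrow> 'x tens \<Rightarrow> 'x tens \<Rightarrow> bool" where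
  "coinv_eq n l scale act F G \<longleftrightarrow> F - G \<in> nminus_image n l scale act"

definition std_word :: "nat \<Rightarrow> (nat \<Rightarrow> nat) \<Rightarrow> nat list" where
  "std_word n ls = concat (map (\<lambda>m. replicate (ls m) m) [1..<n+1])"

definition u_vec :: "nat \<Rightarrow> (nat \<Rightarrow> nat) \<Rightarrow> 'x::zero \<Rightarrow> 'x tens" where
  "u_vec n ls v = (\<lambda>w. if w = std_word n ls then v else 0)"

end

theory Submission
  imports Defs
begin

(* On a simple tensor v (x) u_w, the operator Omega_0i changes the i-th letter m of w into every c and
   acts on v by Ebar_mc, while Omega_ji + 1/n swaps the letters at positions j and i.  For the sorted
   word w = 1^l_1 ... n^l_n and a highest weight vector v, Omega_0i contributes mu_m v (x) u_w plus the
   lowering terms E_mc v (x) u_w[i:=c] with c < m; the s = l_1 + ... + l_(m-1) positions j < i carrying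
   a letter c < m give the swapped words, and the remaining i - 1 - s positions give v (x) u_w itself.
   The lowering terms and swapped words, together with (m - 1) v (x) u_w, are exactly
   sum_(b<m) E_mb (v (x) u_w[i:=b]), an element of n_-(M(mu) (x) V^(x)l); what is left over is
   (mu_m + (i - 1 - s) + (n - 1)/2 - (m - 1)) v (x) u_w = zeta_i v (x) u_w. *)

lemma sum_apply: "(\<Sum>a\<in>A. f a) x = (\<Sum>a\<in>A. f a x)"
  by (induction A rule: infinite_finite_induct) auto

lemma sum_rotate3: "(\<Sum>a\<in>A. \<Sum>b\<in>B. \<Sum>c\<in>C. f a b c) = (\<Sum>c\<in>C. \<Sum>a\<in>A. \<Sum>b\<in>B. f a b c)"
proof -
  have "(\<Sum>a\<in>A. \<Sum>b\<in>B. \<Sum>c\<in>C. f a b c) = (\<Sum>a\<in>A. \<Sum>c\<in>C. \<Sum>b\<in>B. f a b c)"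
    by (intro sum.cong refl sum.swap)
  also have "\<dots> = (\<Sum>c\<in>C. \<Sum>a\<in>A. \<Sum>b\<in>B. f a b c)"
    by (rule sum.swap)
  finally show ?thesis .
qed

lemma sum_delta_pair:
  assumes "finite A" "finite B" "a \<in> A" "b \<in> B"
  shows "(\<Sum>x\<in>A. \<Sum>y\<in>B. if x = a \<and> y = b then f x y else 0) = f a b"
proof -
  have "(\<Sum>y\<in>B. if x = a \<and> y = b then f x y else 0) = (if x = a then f x b else 0)" for x
    using assms by (cases "x = a") (simp_all add: sum.delta)
  then show ?thesis using assms by (simp add: sum.delta)
qed

lemma list_update_eq_iff:
  assumes "length w' = length w" "q < length w"
  shows "w'[q := b] = w \<longleftrightarrow> b = w ! q \<and> (\<forall>k<length w. k \<noteq> q \<longrightarrow> w' ! k = w ! k)"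
  using assms by (auto simp: list_eq_iff_nth_eq nth_list_update)

lemma eq_list_update_iff:
  assumes "length w' = length w" "q < length w"
  shows "w' = w[q := c] \<longleftrightarrow> c = w' ! q \<and> (\<forall>k<length w. k \<noteq> q \<longrightarrow> w' ! k = w ! k)"
  using assms by (auto simp: list_eq_iff_nth_eq nth_list_update)

lemma words_list_update: "w \<in> words n l \<Longrightarrow> c \<in> {1..n} \<Longrightarrow> w[q := c] \<in> words n l"
  unfolding words_def using set_update_subset_insert[of w q c] by auto

lemma words_nth: "w \<in> words n l \<Longrightarrow> q < l \<Longrightarrow> w ! q \<in> {1..n}"
  unfolding words_def by (auto dest!: nth_mem[of q w])

lemma length_concat_replicate_upt:
  "length (concat (map (\<lambda>k. replicate (ls k) k) [a..<b])) = (\<Sum>k=a..<b. ls k)"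
  by (simp add: length_concat comp_def flip: sum_set_upt_conv_sum_list_nat)

lemma std_word_in_words: "std_word n ls \<in> words n (\<Sum>k=1..n. ls k)"
proof -
  have "length (std_word n ls) = (\<Sum>k=1..n. ls k)"
    unfolding std_word_def length_concat_replicate_upt by (simp add: atLeastLessThanSuc_atLeastAtMost)
  then show ?thesis by (auto simp: words_def std_word_def)
qed

lemma std_word_nth_less_iff:
  assumes "1 \<le> k" "k \<le> n + 1" "q < length (std_word n ls)"
  shows "std_word n ls ! q < k \<longleftrightarrow> q < (\<Sum>j=1..<k. ls j)"
proof -
  define block where "block a b = concat (map (\<lambda>k. replicate (ls k) k) [a..<b])" for a b
  have "[1..<n+1] = [1..<k] @ [k..<n+1]"
    using upt_add_eq_append[of 1 k "n + 1 - k"] assms by simp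
  then have w: "std_word n ls = block 1 k @ block k (n + 1)"
    by (simp add: std_word_def block_def)
  have len: "length (block 1 k) = (\<Sum>j=1..<k. ls j)"
    unfolding block_def by (rule length_concat_replicate_upt)
  have set: "set (block a b) \<subseteq> {a..<b}" for a b
    by (auto simp: block_def)
  show ?thesis
  proof (cases "q < length (block 1 k)")
    case True
    then have "std_word n ls ! q \<in> set (block 1 k)"
      by (simp add: w nth_append)
    then show ?thesis using True len set[of 1 k] by auto
  next
    case False
    then have "std_word n ls ! q \<in> set (block k (n + 1))"
      using assms(3) by (simp add: w nth_append)
    then show ?thesis using False len set[of k "n + 1"] by auto
  qed
qed

lemma nth_eq_between:
  fixes w :: "'a::linorder list"
  assumes "\<And>q. q < l \<Longrightarrow> w ! q < m \<longleftrightarrow> q < s" "\<And>q. q < i \<Longrightarrow> w ! q \<le> m"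
    and "s \<le> q" "q < i" "i \<le> l"
  shows "w ! q = m"
proof -
  have "q < l" using assms(4,5) by simp
  then have "\<not> w ! q < m" using assms(1,3) by simp
  moreover have "w ! q \<le> m" using assms(2,4) by simp
  ultimately show ?thesis by simp
qed

lemma Ebar_apply:
  "Ebar n a b i j = (if i = a \<and> j = b then 1 else 0) - (if a = b \<and> i = j \<and> i \<in> {1..n} then 1 / of_nat n else 0)"
  by (auto simp: Ebar_def E_def Id_n_def)

lemma Ebar_eq_E: "a \<noteq> b \<Longrightarrow> Ebar n a b = E a b"
  by (simp add: Ebar_def fun_eq_iff)

lemma Ebar_in_sl:
  assumes "a \<in> {1..n}" "b \<in> {1..n}"
  shows "Ebar n a b \<in> sl n"
proof -
  have "mat_on n (Ebar n a b)"
    using assms by (auto simp: mat_on_def Ebar_apply split: if_splits)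
  moreover have "(\<Sum>i=1..n. Ebar n a b i i) = 0"
  proof (cases "a = b")
    case True
    then show ?thesis using assms by (simp add: Ebar_apply sum_subtractf sum.delta')
  next
    case False
    then show ?thesis by (intro sum.neutral) (auto simp: Ebar_apply)
  qed
  ultimately show ?thesis by (simp add: sl_def)
qed

lemma E_in_sl: "a \<in> {1..n} \<Longrightarrow> b \<in> {1..n} \<Longrightarrow> a \<noteq> b \<Longrightarrow> E a b \<in> sl n"
  using Ebar_in_sl Ebar_eq_E by metis

lemma sl_lincomb:
  assumes "finite A" "\<forall>a\<in>A. x a \<in> sl n"
  shows "(\<lambda>i j. \<Sum>a\<in>A. c a * x a i j) \<in> sl n"
proof -
  have "mat_on n (\<lambda>i j. \<Sum>a\<in>A. c a * x a i j)"
    using assms(2) by (fastforce simp: sl_def mat_on_def elim: sum.not_neutral_contains_not_neutral)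
  moreover have "(\<Sum>i=1..n. \<Sum>a\<in>A. c a * x a i i) = (\<Sum>a\<in>A. c a * (\<Sum>i=1..n. x a i i))"
    unfolding sum_distrib_left by (rule sum.swap)
  moreover have "\<dots> = 0"
    using assms(2) by (simp add: sl_def)
  ultimately show ?thesis by (simp add: sl_def)
qed

lemma sum_Ebar_diag: "(\<Sum>a=1..n. Ebar n a a i j) = 0"
proof (cases "i = j")
  case True
  then show ?thesis by (cases "n = 0") (simp_all add: Ebar_apply sum_subtractf sum.delta)
next
  case False
  then show ?thesis by (intro sum.neutral) (auto simp: Ebar_apply)
qed

lemma sum_Ebar_mult_Ebar:
  assumes "d \<in> {1..n}" "r \<in> {1..n}"
  shows "(\<Sum>a=1..n. \<Sum>b=1..n. Ebar n a b d r * Ebar n b a c m) = Ebar n r d c m"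
proof -
  have "(\<Sum>b=1..n. Ebar n a b d r * Ebar n b a c m) =
      (if d = a then Ebar n r a c m else 0) - (if d = r then Ebar n a a c m / of_nat n else 0)"
    if "a \<in> {1..n}" for a
  proof -
    have "(\<Sum>b=1..n. Ebar n a b d r * Ebar n b a c m) = (\<Sum>b=1..n. (if d = a \<and> r = b then Ebar n b a c m else 0)
        - (if a = b \<and> d = r then Ebar n b a c m / of_nat n else 0))"
      using assms that by (intro sum.cong refl) (simp add: Ebar_apply left_diff_distrib)
    also have "\<dots> = (if d = a then Ebar n r a c m else 0) - (if d = r then Ebar n a a c m / of_nat n else 0)"
      using assms that
      by (cases "d = a"; cases "d = r") (simp_all add: sum_subtractf sum_negf sum.delta sum.delta')
    finally show ?thesis .
  qed
  then have "(\<Sum>a=1..n. \<Sum>b=1..n. Ebar n a b d r * Ebar n b a c m) = (\<Sum>a=1..n.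
      (if d = a then Ebar n r a c m else 0) - (if d = r then Ebar n a a c m / of_nat n else 0))"
    by (intro sum.cong refl)
  also have "\<dots> = Ebar n r d c m"
    using assms sum_Ebar_diag[of n c m]
    by (cases "d = r") (simp_all add: sum_subtractf sum.delta flip: sum_divide_distrib)
  finally show ?thesis .
qed

(* The dual-basis (Casimir) identity of the trace form on sl_n. *)
lemma Ebar_contract:
  assumes "c \<in> {1..n}" "m \<in> {1..n}"
  shows "(\<lambda>i j. \<Sum>a=1..n. \<Sum>b=1..n. Ebar n b a c m * Ebar n a b i j) = Ebar n m c"
proof (intro ext)
  fix i j
  have "(\<Sum>a=1..n. \<Sum>b=1..n. Ebar n b a c m * Ebar n a b i j) = (\<Sum>a=1..n. \<Sum>b=1..n. Ebar n a b c m * Ebar n b a i j)"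
    by (rule sum.swap)
  then show "(\<Sum>a=1..n. \<Sum>b=1..n. Ebar n b a c m * Ebar n a b i j) = Ebar n m c i j"
    using sum_Ebar_mult_Ebar[OF assms] by simp
qed

definition simple_tensor :: "'x::zero \<Rightarrow> nat list \<Rightarrow> 'x tens" where
  "simple_tensor y w = (\<lambda>w'. if w' = w then y else 0)"

lemma simple_tensor_add: "simple_tensor (y + z) w = simple_tensor y w + simple_tensor (z::'x::monoid_add) w"
  by (simp add: simple_tensor_def fun_eq_iff)

lemma simple_tensor_diff: "simple_tensor (y - z) w = simple_tensor y w - simple_tensor (z::'x::ab_group_add) w"
  by (simp add: simple_tensor_def fun_eq_iff)

lemma simple_tensor_0 [simp]: "simple_tensor 0 w = 0"
  by (simp add: simple_tensor_def fun_eq_iff)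

lemma simple_tensor_sum: "simple_tensor (\<Sum>a\<in>A. f a) w = (\<Sum>a\<in>A. simple_tensor (f a :: 'x::comm_monoid_add) w)"
  by (simp add: simple_tensor_def fun_eq_iff sum_apply)

lemma u_vec_eq_simple_tensor: "u_vec n ls v = simple_tensor v (std_word n ls)"
  by (simp add: u_vec_def simple_tensor_def)

locale sl_rep_tensor =
  fixes n l :: nat and scale :: "complex \<Rightarrow> 'x::ab_group_add \<Rightarrow> 'x" and act :: "mat \<Rightarrow> 'x \<Rightarrow> 'x"
  assumes rep: "sl_rep n scale act"
begin

sublocale module scale
  using rep by (simp add: sl_rep_def module_iff_vector_space)

lemma act_add: "x \<in> sl n \<Longrightarrow> act x (y + z) = act x y + act x z"
  using rep by (simp add: sl_rep_def)

lemma act_scale: "x \<in> sl n \<Longrightarrow> act x (scale c y) = scale c (act x y)"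
  using rep by (simp add: sl_rep_def)

lemma act_0: "x \<in> sl n \<Longrightarrow> act x 0 = 0"
  using act_scale[of x 0 0] by simp

lemma act_sum: "x \<in> sl n \<Longrightarrow> act x (\<Sum>a\<in>A. f a) = (\<Sum>a\<in>A. act x (f a))"
  by (induction A rule: infinite_finite_induct) (simp_all add: act_0 act_add)

lemma act_add_left: "x \<in> sl n \<Longrightarrow> x' \<in> sl n \<Longrightarrow> act (\<lambda>i j. x i j + x' i j) y = act x y + act x' y"
  using rep by (simp add: sl_rep_def)

lemma act_scale_left: "x \<in> sl n \<Longrightarrow> act (\<lambda>i j. c * x i j) y = scale c (act x y)"
  using rep by (simp add: sl_rep_def)

lemma act_zero_left: "act (\<lambda>i j. 0) y = 0"
  using act_scale_left[of "\<lambda>i j. 0" 0 y] by (simp add: sl_def mat_on_def)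

lemma act_lincomb:
  assumes "finite A" "\<forall>a\<in>A. x a \<in> sl n"
  shows "act (\<lambda>i j. \<Sum>a\<in>A. c a * x a i j) y = (\<Sum>a\<in>A. scale (c a) (act (x a) y))"
  using assms
proof (induction A rule: finite_induct)
  case empty
  then show ?case by (simp add: act_zero_left)
next
  case (insert a A)
  have "act (\<lambda>i j. c a * x a i j + (\<Sum>a\<in>A. c a * x a i j)) y
      = act (\<lambda>i j. c a * x a i j) y + act (\<lambda>i j. \<Sum>a\<in>A. c a * x a i j) y"
    using insert sl_lincomb[of A x n c] sl_lincomb[of "{a}" x n c] by (intro act_add_left) simp_all
  then show ?case
    using insert by (simp add: act_scale_left)
qed

lemma act_Ebar_contract:
  assumes "c \<in> {1..n}" "m \<in> {1..n}"
  shows "(\<Sum>a=1..n. \<Sum>b=1..n. scale (Ebar n b a c m) (act (Ebar n a b) y)) = act (Ebar n m c) y"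
proof -
  let ?P = "{1..n} \<times> {1..n}"
  have "act (Ebar n m c) y = act (\<lambda>i j. \<Sum>(a, b)\<in>?P. Ebar n b a c m * Ebar n a b i j) y"
    using Ebar_contract[OF assms] by (simp add: sum.cartesian_product)
  also have "\<dots> = (\<Sum>(a, b)\<in>?P. scale (Ebar n b a c m) (act (Ebar n a b) y))"
    using act_lincomb[of ?P "\<lambda>(a, b). Ebar n a b" "\<lambda>(a, b). Ebar n b a c m"]
    by (simp add: Ebar_in_sl case_prod_unfold)
  finally show ?thesis by (simp add: sum.cartesian_product)
qed

lemma scaleT_simple_tensor: "scaleT scale c (simple_tensor y w) = simple_tensor (scale c y) w"
  by (simp add: scaleT_def simple_tensor_def fun_eq_iff)

lemma fac0_simple_tensor:
  "x \<in> sl n \<Longrightarrow> w \<in> words n l \<Longrightarrow> fac0 n l act x (simple_tensor y w) = simple_tensor (act x y) w"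
  by (auto simp: fac0_def simple_tensor_def fun_eq_iff act_0)

lemma fac0_sum: "x \<in> sl n \<Longrightarrow> fac0 n l act x (\<Sum>a\<in>A. F a) = (\<Sum>a\<in>A. fac0 n l act x (F a))"
  by (simp add: fac0_def fun_eq_iff sum_apply act_sum)

lemma facV_sum: "facV n l scale j x (\<Sum>a\<in>A. F a) = (\<Sum>a\<in>A. facV n l scale j x (F a))"
  by (simp add: facV_def fun_eq_iff sum_apply scale_sum_right sum.swap[of _ A])

lemma facV_simple_tensor:
  assumes w: "w \<in> words n l" and j: "j \<in> {1..l}"
  shows "facV n l scale j x (simple_tensor y w) =
    (\<Sum>c=1..n. simple_tensor (scale (x c (w ! (j - 1))) y) (w[j - 1 := c]))"
proof
  fix w'
  define q where "q = j - 1"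
  have q: "q < length w" using w j by (auto simp: q_def words_def)
  show "facV n l scale j x (simple_tensor y w) w' =
    (\<Sum>c=1..n. simple_tensor (scale (x c (w ! (j - 1))) y) (w[j - 1 := c])) w'"
  proof (cases "w' \<in> words n l")
    case True
    define agree where "agree \<longleftrightarrow> (\<forall>k<length w. k \<noteq> q \<longrightarrow> w' ! k = w ! k)"
    have len: "length w' = length w" using w True by (simp add: words_def)
    have "w ! q \<in> {1..n}" "w' ! q \<in> {1..n}"
      using words_nth[OF w, of q] words_nth[OF True, of q] q w by (simp_all add: words_def)
    moreover have "w'[q := b] = w \<longleftrightarrow> b = w ! q \<and> agree" for b
      using list_update_eq_iff[OF len q] by (simp add: agree_def)
    moreover have "w' = w[q := c] \<longleftrightarrow> c = w' ! q \<and> agree" for c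
      using eq_list_update_iff[OF len q] by (simp add: agree_def)
    moreover have "scale a (if P then y else 0) = (if P then scale a y else 0)" for a P
      by simp
    ultimately show ?thesis
      using True unfolding facV_def simple_tensor_def sum_apply q_def[symmetric]
      by (cases agree) (simp_all add: sum.delta')
  next
    case False
    then have "w' \<noteq> w[q := c]" if "c \<in> {1..n}" for c
      using words_list_update[OF w that] by blast
    then show ?thesis
      using False unfolding facV_def simple_tensor_def sum_apply q_def[symmetric] by simp
  qed
qed

lemma Omega0_simple_tensor:
  assumes w: "w \<in> words n l" and i: "i \<in> {1..l}"
  shows "Omega0 n l scale act i (simple_tensor y w) =
    (\<Sum>c=1..n. simple_tensor (act (Ebar n (w ! (i - 1)) c) y) (w[i - 1 := c]))"
proof -
  define m where "m = w ! (i - 1)"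
  have "i - 1 < l" using i by auto
  then have m: "m \<in> {1..n}" using words_nth[OF w] by (simp add: m_def)
  have "Omega0 n l scale act i (simple_tensor y w) = (\<Sum>a=1..n. \<Sum>b=1..n. \<Sum>c=1..n.
      simple_tensor (scale (Ebar n b a c m) (act (Ebar n a b) y)) (w[i - 1 := c]))"
    unfolding Omega0_def facV_simple_tensor[OF w i, folded m_def]
    by (intro sum.cong refl) (simp add: fac0_sum Ebar_in_sl fac0_simple_tensor words_list_update[OF w] act_scale)
  also have "\<dots> = (\<Sum>c=1..n. simple_tensor (\<Sum>a=1..n. \<Sum>b=1..n.
      scale (Ebar n b a c m) (act (Ebar n a b) y)) (w[i - 1 := c]))"
    unfolding simple_tensor_sum by (rule sum_rotate3)
  also have "\<dots> = (\<Sum>c=1..n. simple_tensor (act (Ebar n m c) y) (w[i - 1 := c]))"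
    using m by (intro sum.cong refl) (simp only: act_Ebar_contract)
  finally show ?thesis by (simp add: m_def)
qed

lemma OmegaV_shifted_simple_tensor:
  assumes w: "w \<in> words n l" and i: "i \<in> {1..l}" and j: "j \<in> {1..l}" and "j \<noteq> i"
  shows "OmegaV n l scale j i (simple_tensor y w) + scaleT scale (1 / of_nat n) (simple_tensor y w) =
    simple_tensor y (w[i - 1 := w ! (j - 1), j - 1 := w ! (i - 1)])"
proof -
  define p q m r where "p = i - 1" and "q = j - 1" and "m = w ! p" and "r = w ! q"
  have "p < l" "q < l" "p \<noteq> q" using i j \<open>j \<noteq> i\<close> by (auto simp: p_def q_def)
  then have m: "m \<in> {1..n}" and r: "r \<in> {1..n}" and upd: "w[p := c] ! q = r" for c
    using words_nth[OF w] by (simp_all add: m_def r_def)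
  have "OmegaV n l scale j i (simple_tensor y w) = (\<Sum>a=1..n. \<Sum>b=1..n. \<Sum>c=1..n. \<Sum>d=1..n.
      simple_tensor (scale (Ebar n a b d r * Ebar n b a c m) y) (w[p := c, q := d]))"
    unfolding OmegaV_def facV_simple_tensor[OF w i] p_def[symmetric] m_def[symmetric]
    by (intro sum.cong refl)
      (simp add: facV_sum facV_simple_tensor[OF words_list_update[OF w] j, folded q_def] upd)
  also have "\<dots> = (\<Sum>c=1..n. \<Sum>d=1..n.
      simple_tensor (scale (\<Sum>a=1..n. \<Sum>b=1..n. Ebar n a b d r * Ebar n b a c m) y) (w[p := c, q := d]))"
    unfolding simple_tensor_sum scale_sum_left
    by (rule trans[OF sum_rotate3], intro sum.cong refl sum_rotate3)
  also have "\<dots> = (\<Sum>c=1..n. \<Sum>d=1..n. simple_tensor (scale (Ebar n r d c m) y) (w[p := c, q := d]))"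
    using r by (intro sum.cong refl) (simp only: sum_Ebar_mult_Ebar)
  also have "\<dots> = (\<Sum>c=1..n. \<Sum>d=1..n. if c = r \<and> d = m then simple_tensor y (w[p := c, q := d]) else 0)
      - (\<Sum>c=1..n. \<Sum>d=1..n.
           if c = m \<and> d = r then simple_tensor (scale (1 / of_nat n) y) (w[p := c, q := d]) else 0)"
    unfolding sum_subtractf[symmetric]
  proof (intro sum.cong refl)
    fix c d assume "c \<in> {1..n}"
    then have "Ebar n r d c m = (if c = r \<and> d = m then 1 else 0) - (if c = m \<and> d = r then 1 / of_nat n else 0)"
      unfolding Ebar_apply by (cases "c = r"; cases "d = m"; cases "c = m"; cases "d = r") simp_all
    moreover have "simple_tensor (scale ((if P then 1 else 0) - (if Q then a else 0)) y) W =
      (if P then simple_tensor y W else 0) - (if Q then simple_tensor (scale a y) W else 0)" for P Q a W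
      by (simp add: simple_tensor_diff scale_left_diff_distrib)
    ultimately show "simple_tensor (scale (Ebar n r d c m) y) (w[p := c, q := d]) =
      (if c = r \<and> d = m then simple_tensor y (w[p := c, q := d]) else 0) -
      (if c = m \<and> d = r then simple_tensor (scale (1 / of_nat n) y) (w[p := c, q := d]) else 0)"
      by (simp only:)
  qed
  also have "\<dots> = simple_tensor y (w[p := r, q := m]) - scaleT scale (1 / of_nat n) (simple_tensor y w)"
    using m r by (simp add: sum_delta_pair scaleT_simple_tensor m_def r_def)
  finally show ?thesis by (simp add: p_def q_def m_def r_def)
qed

lemma actT_E_simple_tensor:
  assumes w: "w \<in> words n l" and m: "m \<in> {1..n}" and b: "b \<in> {1..n}" "b \<noteq> m"
  shows "actT n l scale act (E m b) (simple_tensor y w) =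
    simple_tensor (act (E m b) y) w + (\<Sum>j=1..l. if w ! (j - 1) = b then simple_tensor y (w[j - 1 := m]) else 0)"
proof -
  have "facV n l scale j (E m b) (simple_tensor y w) =
      (if w ! (j - 1) = b then simple_tensor y (w[j - 1 := m]) else 0)" if j: "j \<in> {1..l}" for j
  proof -
    have "simple_tensor (scale (E m b c (w ! (j - 1))) y) W =
        (if c = m \<and> w ! (j - 1) = b then simple_tensor y W else 0)" for c W
      by (simp add: E_def)
    then show ?thesis
      unfolding facV_simple_tensor[OF w j] using m by (simp add: sum.delta)
  qed
  then show ?thesis
    using E_in_sl[OF m b(1) b(2)[symmetric]] by (simp add: actT_def fac0_simple_tensor[OF _ w])
qed

lemma sum_actT_E_list_update:
  assumes w: "w \<in> words n l" and i: "i \<in> {1..l}" and m: "w ! (i - 1) = m"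
  shows "(\<Sum>b\<in>{1..<m}. actT n l scale act (E m b) (simple_tensor y (w[i - 1 := b]))) =
    (\<Sum>b\<in>{1..<m}. simple_tensor (act (E m b) y) (w[i - 1 := b])) + simple_tensor (scale (of_nat (m - 1)) y) w
    + (\<Sum>j\<in>{j \<in> {1..l}. w ! (j - 1) < m}. simple_tensor y (w[i - 1 := w ! (j - 1), j - 1 := m]))"
proof -
  define p where "p = i - 1"
  define T where "T j = simple_tensor y (w[p := w ! (j - 1), j - 1 := m])" for j
  have "p < l" using i by (auto simp: p_def)
  then have p: "p < length w" and m_range: "m \<in> {1..n}" and wpm: "w[p := m] = w"
    using w words_nth[OF w] m by (auto simp: p_def words_def)
  have inner: "(\<Sum>b\<in>{1..<m}. if w[p := b] ! (j - 1) = b then simple_tensor y (w[p := b, j - 1 := m]) else 0)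
      = (if j = i then simple_tensor (scale (of_nat (m - 1)) y) w else 0) + (if w ! (j - 1) < m then T j else 0)"
    if j: "j \<in> {1..l}" for j
  proof (cases "j = i")
    case True
    then have "j - 1 = p" by (simp add: p_def)
    then show ?thesis
      using True p wpm m by (simp add: p_def sum_constant_scale flip: simple_tensor_sum)
  next
    case False
    then have "j - 1 \<noteq> p" using i j by (auto simp: p_def)
    moreover have "w ! (j - 1) \<ge> 1" using words_nth[OF w, of "j - 1"] j by auto
    ultimately show ?thesis
      using False by (simp add: T_def sum.delta)
  qed
  have "(\<Sum>b\<in>{1..<m}. actT n l scale act (E m b) (simple_tensor y (w[p := b]))) =
      (\<Sum>b\<in>{1..<m}. simple_tensor (act (E m b) y) (w[p := b])) +
      (\<Sum>b\<in>{1..<m}. \<Sum>j=1..l. if w[p := b] ! (j - 1) = b then simple_tensor y (w[p := b, j - 1 := m]) else 0)"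
    using m_range by (simp add: actT_E_simple_tensor words_list_update[OF w] sum.distrib)
  also have "\<dots> = (\<Sum>b\<in>{1..<m}. simple_tensor (act (E m b) y) (w[p := b])) +
      (\<Sum>j=1..l. \<Sum>b\<in>{1..<m}. if w[p := b] ! (j - 1) = b then simple_tensor y (w[p := b, j - 1 := m]) else 0)"
    by (simp only: sum.swap[where A = "{1..<m}"])
  also have "\<dots> = (\<Sum>b\<in>{1..<m}. simple_tensor (act (E m b) y) (w[p := b])) +
      (\<Sum>j=1..l. (if j = i then simple_tensor (scale (of_nat (m - 1)) y) w else 0)
        + (if w ! (j - 1) < m then T j else 0))"
    by (rule arg_cong[where f = "\<lambda>x. _ + x"], intro sum.cong refl inner)
  also have "\<dots> = (\<Sum>b\<in>{1..<m}. simple_tensor (act (E m b) y) (w[p := b])) +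
      simple_tensor (scale (of_nat (m - 1)) y) w + (\<Sum>j\<in>{j \<in> {1..l}. w ! (j - 1) < m}. T j)"
    using i by (simp add: sum.distrib add.assoc flip: sum.inter_filter)
  finally show ?thesis by (simp add: p_def T_def)
qed

lemma sum_OmegaV_shifted_simple_tensor:
  assumes w: "w \<in> words n l" and i: "i \<in> {1..l}"
    and below: "\<And>q. q < l \<Longrightarrow> w ! q < m \<longleftrightarrow> q < s"
    and upto: "\<And>q. q < i \<Longrightarrow> w ! q \<le> m"
    and "s < i"
  shows "(\<Sum>j\<in>{1..<i}. OmegaV n l scale j i (simple_tensor y w) + scaleT scale (1 / of_nat n) (simple_tensor y w))
    = (\<Sum>j=1..s. simple_tensor y (w[i - 1 := w ! (j - 1), j - 1 := m]))
      + simple_tensor (scale (of_nat (i - 1 - s)) y) w"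
proof -
  define T where "T j = simple_tensor y (w[i - 1 := w ! (j - 1), j - 1 := m])" for j
  have wi: "w ! (i - 1) = m"
    using i \<open>s < i\<close> by (intro nth_eq_between[OF below upto]) auto
  have "(\<Sum>j\<in>{1..<i}. OmegaV n l scale j i (simple_tensor y w) + scaleT scale (1 / of_nat n) (simple_tensor y w))
      = (\<Sum>j\<in>{1..<i}. T j)"
    using i by (intro sum.cong refl) (simp add: OmegaV_shifted_simple_tensor[OF w i, unfolded wi] T_def)
  also have "\<dots> = (\<Sum>j\<in>{1..<s+1}. T j) + (\<Sum>j\<in>{s+1..<i}. T j)"
    using \<open>s < i\<close> by (intro sum.atLeastLessThan_concat[symmetric]) auto
  also have "(\<Sum>j\<in>{s+1..<i}. T j) = (\<Sum>j\<in>{s+1..<i}. simple_tensor y w)"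
  proof (intro sum.cong refl)
    fix j assume "j \<in> {s+1..<i}"
    then have wj: "w ! (j - 1) = m"
      using i by (intro nth_eq_between[OF below upto]) auto
    then have "w[i - 1 := m, j - 1 := m] = w"
      using wi by (metis list_update_id)
    then show "T j = simple_tensor y w"
      unfolding T_def wj by simp
  qed
  also have "\<dots> = simple_tensor (scale (of_nat (i - 1 - s)) y) w"
    by (simp add: sum_constant_scale flip: simple_tensor_sum)
  also have "(\<Sum>j\<in>{1..<s+1}. T j) = (\<Sum>j=1..s. T j)"
    by (rule sum.cong) auto
  finally show ?thesis by (simp only: T_def)
qed

lemma module_scaleT: "module (scaleT scale)"
  by unfold_locales (simp_all add: scaleT_def fun_eq_iff scale_right_distrib scale_left_distrib)

lemma sum_actT_in_nminus_image:
  assumes "\<And>b. b \<in> B \<Longrightarrow> a \<in> {1..n} \<and> b \<in> {1..n} \<and> b < a"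
  shows "(\<Sum>b\<in>B. actT n l scale act (E a b) (F b)) \<in> nminus_image n l scale act"
  unfolding nminus_image_def
  using assms by (intro module.span_sum[OF module_scaleT] module.span_base[OF module_scaleT]) blast

end

locale highest_weight_tensor = sl_rep_tensor n l scale act
  for n l :: nat and scale :: "complex \<Rightarrow> 'x::ab_group_add \<Rightarrow> 'x" and act :: "mat \<Rightarrow> 'x \<Rightarrow> 'x" +
  fixes v :: 'x and \<mu> :: "nat \<Rightarrow> complex"
  assumes upper_annihilates: "\<And>a b. a \<in> {1..n} \<Longrightarrow> b \<in> {1..n} \<Longrightarrow> a < b \<Longrightarrow> act (E a b) v = 0"
    and diag_action: "\<And>d. diag d \<in> sl n \<Longrightarrow> act (diag d) v = scale (\<Sum>k=1..n. d k * \<mu> k) v"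
    and weight: "weight n \<mu>"
begin

lemma act_Ebar_diag:
  assumes a: "a \<in> {1..n}"
  shows "act (Ebar n a a) v = scale (\<mu> a) v"
proof -
  define d :: "nat \<Rightarrow> complex"
    where "d k = (if k = a then 1 else 0) - (if k \<in> {1..n} then 1 / of_nat n else 0)" for k
  have "Ebar n a a = diag d"
    by (auto simp: fun_eq_iff Ebar_apply diag_def d_def)
  moreover have "(\<Sum>k=1..n. d k * \<mu> k) = (\<Sum>k=1..n. (if k = a then \<mu> k else 0) - \<mu> k / of_nat n)"
    by (intro sum.cong refl) (simp add: d_def algebra_simps)
  moreover have "\<dots> = \<mu> a"
    using a weight by (simp add: sum_subtractf sum.delta weight_def flip: sum_divide_distrib)
  ultimately show ?thesis
    using diag_action Ebar_in_sl[OF a a] by simp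
qed

lemma Omega0_highest_weight:
  assumes w: "w \<in> words n l" and i: "i \<in> {1..l}" and m: "w ! (i - 1) = m"
  shows "Omega0 n l scale act i (simple_tensor v w) =
    simple_tensor (scale (\<mu> m) v) w + (\<Sum>c\<in>{1..<m}. simple_tensor (act (E m c) v) (w[i - 1 := c]))"
proof -
  define f where "f c = simple_tensor (act (Ebar n m c) v) (w[i - 1 := c])" for c
  have "i - 1 < l" using i by auto
  then have m_range: "m \<in> {1..n}" and wm: "w[i - 1 := m] = w"
    using w words_nth[OF w] m by (auto simp: words_def)
  have "Omega0 n l scale act i (simple_tensor v w) = (\<Sum>c=1..n. f c)"
    unfolding Omega0_simple_tensor[OF w i] m f_def ..
  also have "\<dots> = (\<Sum>c=1..m. f c)"
    using m_range upper_annihilates[of m] by (intro sum.mono_neutral_right) (auto simp: f_def Ebar_eq_E)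
  also have "\<dots> = f m + (\<Sum>c\<in>{1..<m}. f c)"
    using m_range by (simp add: sum.last_plus)
  also have "\<dots> = simple_tensor (scale (\<mu> m) v) w + (\<Sum>c\<in>{1..<m}. simple_tensor (act (E m c) v) (w[i - 1 := c]))"
    using m_range wm by (simp add: f_def act_Ebar_diag Ebar_eq_E)
  finally show ?thesis .
qed

lemma yop_minus_scaleT_eq_sum_actT:
  assumes w: "w \<in> words n l" and i: "i \<in> {1..l}"
    and below: "\<And>q. q < l \<Longrightarrow> w ! q < m \<longleftrightarrow> q < s"
    and upto: "\<And>q. q < i \<Longrightarrow> w ! q \<le> m"
    and "s < i"
  shows "yop n l scale act i (simple_tensor v w)
      - scaleT scale (\<mu> m + rho n m + of_nat i - of_nat s - 1) (simple_tensor v w)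
    = (\<Sum>b\<in>{1..<m}. actT n l scale act (E m b) (simple_tensor v (w[i - 1 := b])))"
proof -
  define p where "p = i - 1"
  define \<zeta> where "\<zeta> = \<mu> m + rho n m + of_nat i - of_nat s - 1"
  define \<alpha> where "\<alpha> c = simple_tensor (scale c v) w" for c
  define T where "T j = simple_tensor v (w[p := w ! (j - 1), j - 1 := m])" for j
  define A where "A = (\<Sum>b\<in>{1..<m}. simple_tensor (act (E m b) v) (w[p := b]))"
  define B where "B = (\<Sum>j=1..s. T j)"
  have "p < l" using i by (auto simp: p_def)
  have wp: "w ! p = m"
    using i \<open>s < i\<close> unfolding p_def by (intro nth_eq_between[OF below upto]) auto
  have flips: "(\<Sum>j\<in>{1..<i}.
      OmegaV n l scale j i (simple_tensor v w) + scaleT scale (1 / of_nat n) (simple_tensor v w))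
      = B + \<alpha> (of_nat (i - 1 - s))"
    using sum_OmegaV_shifted_simple_tensor[OF w i below upto \<open>s < i\<close>] by (simp add: B_def T_def \<alpha>_def p_def)
  have "{j \<in> {1..l}. w ! (j - 1) < m} = {1..s}"
    using below \<open>s < i\<close> i by auto
  then have lower: "(\<Sum>b\<in>{1..<m}. actT n l scale act (E m b) (simple_tensor v (w[p := b])))
      = A + \<alpha> (of_nat (m - 1)) + B"
    using sum_actT_E_list_update[OF w i wp[unfolded p_def]] by (simp add: A_def B_def T_def \<alpha>_def p_def)
  have "yop n l scale act i (simple_tensor v w)
      = \<alpha> (\<mu> m) + A + (B + \<alpha> (of_nat (i - 1 - s))) + \<alpha> ((of_nat n - 1) / 2)"
    unfolding yop_def flips Omega0_highest_weight[OF w i wp[unfolded p_def]]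
    by (simp add: A_def \<alpha>_def p_def scaleT_simple_tensor)
  moreover have "\<alpha> (\<mu> m) + \<alpha> (of_nat (i - 1 - s)) + \<alpha> ((of_nat n - 1) / 2) = \<alpha> (of_nat (m - 1)) + \<alpha> \<zeta>"
  proof -
    have "1 \<le> m" using wp words_nth[OF w \<open>p < l\<close>] by simp
    then have "\<mu> m + of_nat (i - 1 - s) + (of_nat n - 1) / 2 = of_nat (m - 1) + \<zeta>"
      using \<open>s < i\<close> by (simp add: \<zeta>_def rho_def of_nat_diff field_simps)
    then show ?thesis
      by (simp add: \<alpha>_def flip: simple_tensor_add scale_left_distrib)
  qed
  ultimately show ?thesis
    using lower by (simp add: \<zeta>_def \<alpha>_def p_def scaleT_simple_tensor algebra_simps)
qed

end

theorem mainTheorem4: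
  fixes n l :: nat and ls :: "nat \<Rightarrow> nat"
    and lam \<mu> :: "nat \<Rightarrow> complex"
    and scale :: "complex \<Rightarrow> 'x::ab_group_add \<Rightarrow> 'x"
    and act :: "mat \<Rightarrow> 'x \<Rightarrow> 'x" and v :: 'x
  assumes "n \<ge> 2" and "l \<ge> 1"
    and "integral_weight n lam" and "integral_weight n \<mu>"
    and "(\<Sum>k=1..n. ls k) = l"
    and "\<exists>c. \<forall>k\<in>{1..n}. lam k - \<mu> k = of_nat (ls k) + c"
    and "is_verma n scale act v \<mu>"
  shows "\<forall>i\<in>{1..l}. \<forall>m\<in>{1..n}.
           (\<Sum>k=1..<m. ls k) < i \<and> i \<le> (\<Sum>k=1..m. ls k) \<longrightarrow>
           coinv_eq n l scale act
             (yop n l scale act i (u_vec n ls v))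
             (scaleT scale (\<mu> m + rho n m + of_nat i - of_nat (\<Sum>k=1..<m. ls k) - 1)
                (u_vec n ls v))"
proof (intro ballI impI)
  (* The hypotheses on n, l and lam only place u_vec in the weight space F_lam. *)
  fix i m assume i: "i \<in> {1..l}" and m: "m \<in> {1..n}"
    and block: "(\<Sum>k=1..<m. ls k) < i \<and> i \<le> (\<Sum>k=1..m. ls k)"
  interpret highest_weight_tensor n l scale act v \<mu>
    using assms(4,7) by unfold_locales (auto simp: is_verma_def integral_weight_def)
  define w where "w = std_word n ls"
  have w: "w \<in> words n l" and len: "length w = l"
    using std_word_in_words[of n ls] assms(5) by (simp_all add: w_def words_def)
  have below: "w ! q < m \<longleftrightarrow> q < (\<Sum>k=1..<m. ls k)" if "q < l" for q
    using std_word_nth_less_iff[of m n q ls] m that len by (simp add: w_def)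
  have upto: "w ! q \<le> m" if "q < i" for q
    using std_word_nth_less_iff[of "m + 1" n q ls] m that i block len
    by (simp add: w_def atLeastLessThanSuc_atLeastAtMost)
  have "yop n l scale act i (simple_tensor v w)
      - scaleT scale (\<mu> m + rho n m + of_nat i - of_nat (\<Sum>k=1..<m. ls k) - 1) (simple_tensor v w)
    = (\<Sum>b\<in>{1..<m}. actT n l scale act (E m b) (simple_tensor v (w[i - 1 := b])))"
    using block by (intro yop_minus_scaleT_eq_sum_actT[OF w i below upto]) simp_all
  also have "\<dots> \<in> nminus_image n l scale act"
    using m by (intro sum_actT_in_nminus_image) auto
  finally show "coinv_eq n l scale act (yop n l scale act i (u_vec n ls v))
      (scaleT scale (\<mu> m + rho n m + of_nat i - of_nat (\<Sum>k=1..<m. ls k) - 1) (u_vec n ls v))"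
    unfolding coinv_eq_def u_vec_eq_simple_tensor w_def[symmetric] .
qed

end
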